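(* Let $\mathcal{M}=(S,s_I,\mathit{Act},V,\mathcal{P})$ be an affine parametric Markov decision process, let $T\subseteq S$ and $\lambda\in[0,1]$, and let $\varphi$ be the reachability specification "$T$ is reached with probability at most $\lambda$". Assume that for every $s,s'\in S$ and $\alpha\in A(s)$, $\mathcal{P}(s,\alpha,s')=2d_{s,\alpha,s'}\,y_{s,\alpha,s'}+c_{s,\alpha,s'}$ with $y_{s,\alpha,s'}\in V$ and constants $c_{s,\alpha,s'},d_{s,\alpha,s'}\in\mathbb{R}$. Fix constants $\varepsilon_{\mathrm{graph}}>0$ and $\tau>0$, and arbitrary reference values $\hat v\in\mathbb{R}$ ($v\in V$) and $\hat p_s\in\mathbb{R}$ ($s\in S$). For each triple $(s,\alpha,s')$ write $d=d_{s,\alpha,s'}$, $c=c_{s,\alpha,s'}$, $y=y_{s,\alpha,s'}$, $z=p_{s'}$, $\hat y=\widehat{y_{s,\alpha,s'}}$, $\hat z=\hat p_{s'}$, $\sigma=1$ if $d\ge0$ and $\sigma=-1$ otherwise, and set $h_{\mathrm{cvx}}(s,\alpha,s')=|d|(y+\sigma z)^2+c\,z$ and $h_{\mathrm{aff}}(s,\alpha,s')=-|d|(\hat y^2+\hat z^2)-2|d|\big(\hat y(y-\hat y)+\hat z(z-\hat z)\big)$. Consider the convex penalty problem in the real variables $v\in V$, $p_s\in[0,1]$ ($s\in S$) and $k_s$ ($s\in S\setminus T$): minimize $p_{s_I}+\tau\sum_{s\in S\setminus T}k_s$ subject to $p_s=1$ for all $s\in T$; $\mathcal{P}(s,\alpha,s')\ge\varepsilon_{\mathrm{graph}}$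 for all $s,s'\in S$ and $\alpha\in A(s)$ such that $\mathcal{P}(s,\alpha,s')$ is not the zero polynomial; $\sum_{s'\in S}\mathcal{P}(s,\alpha,s')=1$ for all $s\in S$ and $\alpha\in A(s)$; $\lambda\ge p_{s_I}$; $k_s+p_s\ge\sum_{s'\in S}\big(h_{\mathrm{cvx}}(s,\alpha,s')+h_{\mathrm{aff}}(s,\alpha,s')\big)$ for all $s\in S\setminus T$ and $\alpha\in A(s)$; $k_s\ge 0$ for all $s\in S\setminus T$. If $(\mathbf{v},\mathbf{p},\mathbf{k})$ is a feasible solution of this problem with $\tau\sum_{s\in S\setminus T}k_s=0$, then the parameter instantiation $\mathbf{v}$ is well-defined for $\mathcal{M}$ and $\mathcal{M}[\mathbf{v}]\models\varphi$.
   Context: A pMDP is a tuple $(S,s_I,\mathit{Act},V,\mathcal{P})$ with finite state set $S$, initial state $s_I$, finite action set $\mathit{Act}$, finite set $V$ of real-valued parameters, and transition function $\mathcal{P}:S\times\mathit{Act}\times S\to\mathbb{Q}[V]$ (polynomials over $V$); it is affine if every $\mathcal{P}(s,\alpha,s')$ is affine in the parameters. $A(s)=\{\alpha\mid\exists s'.\ \mathcal{P}(s,\alpha,s')\ne0\}$ is the nonempty set of enabled actions at $s$. An instantiation $\mathbf{v}:V\to\mathbb{R}$ yields $\mathcal{M}[\mathbf{v}]$ by evaluating each polynomial at $\mathbf{v}$; it is well-defined if $\mathcal{M}[\mathbf{v}]$ is a Markov decision process, i.e. all $\mathcal{P}(s,\alpha,s')[\mathbf{v}]\in[0,1]$ and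 $\sum_{s'}\mathcal{P}(s,\alpha,s')[\mathbf{v}]=1$ for all $s$ and $\alpha\in A(s)$. A (memoryless deterministic) strategy is a map $\sigma:S\to\mathit{Act}$ with $\sigma(s)\in A(s)$; it induces a Markov chain. $\mathcal{M}[\mathbf{v}]\models\varphi$ means that for every strategy $\sigma$, the probability of eventually reaching $T$ from $s_I$ in the Markov chain induced by $\sigma$ on $\mathcal{M}[\mathbf{v}]$ is at most $\lambda$. *)

theory Defs
  imports Complex_Main
begin

(* An affine pMDP whose transition polynomials have the shape
   P(s,a,s') = 2 d(s,a,s') * y(s,a,s') + c(s,a,s') is represented by the
   coefficient data d, c :: 's => 'a => 's => real and the parameter
   map y :: 's => 'a => 's => 'v. *)

definition trans_eval ::
  "('s \<Rightarrow> 'a \<Rightarrow> 's \<Rightarrow> real) \<Rightarrow> ('s \<Rightarrow> 'a \<Rightarrow> 's \<Rightarrow> 'v) \<Rightarrow>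
   ('s \<Rightarrow> 'a \<Rightarrow> 's \<Rightarrow> real) \<Rightarrow> ('v \<Rightarrow> real) \<Rightarrow> 's \<Rightarrow> 'a \<Rightarrow> 's \<Rightarrow> real" where
  "trans_eval d y c v s a s' = 2 * d s a s' * v (y s a s') + c s a s'"

definition nonzero_poly ::
  "('s \<Rightarrow> 'a \<Rightarrow> 's \<Rightarrow> real) \<Rightarrow> ('s \<Rightarrow> 'a \<Rightarrow> 's \<Rightarrow> real) \<Rightarrow> 's \<Rightarrow> 'a \<Rightarrow> 's \<Rightarrow> bool" where
  "nonzero_poly d c s a s' \<longleftrightarrow> d s a s' \<noteq> 0 \<or> c s a s' \<noteq> 0"

definition enabled ::
  "'s set \<Rightarrow> 'a set \<Rightarrow> ('s \<Rightarrow> 'a \<Rightarrow> 's \<Rightarrow> real) \<Rightarrow> ('s \<Rightarrow> 'a \<Rightarrow> 's \<Rightarrow> real) \<Rightarrow> 's \<Rightarrow> 'a set" where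
  "enabled S Act d c s = {a \<in> Act. \<exists>s'\<in>S. nonzero_poly d c s a s'}"

definition well_defined ::
  "'s set \<Rightarrow> 'a set \<Rightarrow> ('s \<Rightarrow> 'a \<Rightarrow> 's \<Rightarrow> real) \<Rightarrow> ('s \<Rightarrow> 'a \<Rightarrow> 's \<Rightarrow> 'v) \<Rightarrow>
   ('s \<Rightarrow> 'a \<Rightarrow> 's \<Rightarrow> real) \<Rightarrow> ('v \<Rightarrow> real) \<Rightarrow> bool" where
  "well_defined S Act d y c v \<longleftrightarrow>
     (\<forall>s\<in>S. \<forall>a\<in>enabled S Act d c s.
        (\<forall>s'\<in>S. 0 \<le> trans_eval d y c v s a s' \<and> trans_eval d y c v s a s' \<le> 1) \<and>
        (\<Sum>s'\<in>S. trans_eval d y c v s a s') = 1)"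

fun reach_within :: "'s set \<Rightarrow> ('s \<Rightarrow> 's \<Rightarrow> real) \<Rightarrow> 's set \<Rightarrow> nat \<Rightarrow> 's \<Rightarrow> real" where
  "reach_within S P T 0 s = (if s \<in> T then 1 else 0)"
| "reach_within S P T (Suc n) s =
     (if s \<in> T then 1 else (\<Sum>s'\<in>S. P s s' * reach_within S P T n s'))"

definition reach_prob :: "'s set \<Rightarrow> ('s \<Rightarrow> 's \<Rightarrow> real) \<Rightarrow> 's set \<Rightarrow> 's \<Rightarrow> real" where
  "reach_prob S P T s = (SUP n. reach_within S P T n s)"

definition induced_mc ::
  "('s \<Rightarrow> 'a \<Rightarrow> 's \<Rightarrow> real) \<Rightarrow> ('s \<Rightarrow> 'a \<Rightarrow> 's \<Rightarrow> 'v) \<Rightarrow>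
   ('s \<Rightarrow> 'a \<Rightarrow> 's \<Rightarrow> real) \<Rightarrow> ('v \<Rightarrow> real) \<Rightarrow> ('s \<Rightarrow> 'a) \<Rightarrow> 's \<Rightarrow> 's \<Rightarrow> real" where
  "induced_mc d y c v \<sigma> s s' = trans_eval d y c v s (\<sigma> s) s'"

definition satisfies ::
  "'s set \<Rightarrow> 's \<Rightarrow> 'a set \<Rightarrow> ('s \<Rightarrow> 'a \<Rightarrow> 's \<Rightarrow> real) \<Rightarrow> ('s \<Rightarrow> 'a \<Rightarrow> 's \<Rightarrow> 'v) \<Rightarrow>
   ('s \<Rightarrow> 'a \<Rightarrow> 's \<Rightarrow> real) \<Rightarrow> ('v \<Rightarrow> real) \<Rightarrow> 's set \<Rightarrow> real \<Rightarrow> bool" where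
  "satisfies S sI Act d y c v T lam \<longleftrightarrow>
     (\<forall>\<sigma>. (\<forall>s\<in>S. \<sigma> s \<in> enabled S Act d c s) \<longrightarrow>
        reach_prob S (induced_mc d y c v \<sigma>) T sI \<le> lam)"

definition sgn_d :: "real \<Rightarrow> real" where
  "sgn_d x = (if x \<ge> 0 then 1 else -1)"

definition h_cvx ::
  "('s \<Rightarrow> 'a \<Rightarrow> 's \<Rightarrow> real) \<Rightarrow> ('s \<Rightarrow> 'a \<Rightarrow> 's \<Rightarrow> 'v) \<Rightarrow> ('s \<Rightarrow> 'a \<Rightarrow> 's \<Rightarrow> real) \<Rightarrow>
   ('v \<Rightarrow> real) \<Rightarrow> ('s \<Rightarrow> real) \<Rightarrow> 's \<Rightarrow> 'a \<Rightarrow> 's \<Rightarrow> real" where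
  "h_cvx d y c v p s a s' =
     \<bar>d s a s'\<bar> * (v (y s a s') + sgn_d (d s a s') * p s')^2 + c s a s' * p s'"

definition h_aff ::
  "('s \<Rightarrow> 'a \<Rightarrow> 's \<Rightarrow> real) \<Rightarrow> ('s \<Rightarrow> 'a \<Rightarrow> 's \<Rightarrow> 'v) \<Rightarrow> ('v \<Rightarrow> real) \<Rightarrow> ('s \<Rightarrow> real) \<Rightarrow>
   ('v \<Rightarrow> real) \<Rightarrow> ('s \<Rightarrow> real) \<Rightarrow> 's \<Rightarrow> 'a \<Rightarrow> 's \<Rightarrow> real" where
  "h_aff d y vhat phat v p s a s' =
     - \<bar>d s a s'\<bar> * ((vhat (y s a s'))^2 + (phat s')^2)
     - 2 * \<bar>d s a s'\<bar> * (vhat (y s a s') * (v (y s a s') - vhat (y s a s'))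
                          + phat s' * (p s' - phat s'))"

definition feasible ::
  "'s set \<Rightarrow> 's \<Rightarrow> 'a set \<Rightarrow> ('s \<Rightarrow> 'a \<Rightarrow> 's \<Rightarrow> real) \<Rightarrow> ('s \<Rightarrow> 'a \<Rightarrow> 's \<Rightarrow> 'v) \<Rightarrow>
   ('s \<Rightarrow> 'a \<Rightarrow> 's \<Rightarrow> real) \<Rightarrow> 's set \<Rightarrow> real \<Rightarrow> real \<Rightarrow> ('v \<Rightarrow> real) \<Rightarrow> ('s \<Rightarrow> real) \<Rightarrow>
   ('v \<Rightarrow> real) \<Rightarrow> ('s \<Rightarrow> real) \<Rightarrow> ('s \<Rightarrow> real) \<Rightarrow> bool" where
  "feasible S sI Act d y c T lam eps vhat phat v p k \<longleftrightarrow>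
     (\<forall>s\<in>S. 0 \<le> p s \<and> p s \<le> 1) \<and>
     (\<forall>s\<in>T. p s = 1) \<and>
     (\<forall>s\<in>S. \<forall>a\<in>enabled S Act d c s. \<forall>s'\<in>S.
        nonzero_poly d c s a s' \<longrightarrow> trans_eval d y c v s a s' \<ge> eps) \<and>
     (\<forall>s\<in>S. \<forall>a\<in>enabled S Act d c s. (\<Sum>s'\<in>S. trans_eval d y c v s a s') = 1) \<and>
     lam \<ge> p sI \<and>
     (\<forall>s\<in>S - T. \<forall>a\<in>enabled S Act d c s.
        k s + p s \<ge> (\<Sum>s'\<in>S. h_cvx d y c v p s a s' + h_aff d y vhat phat v p s a s')) \<and>
     (\<forall>s\<in>S - T. k s \<ge> 0)"

end

theory Submission
  imports Defs
begin

text \<open>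
  The term \<open>h_aff\<close> is the linearisation at the reference point of the concave
  part \<open>-|d| (y\<^sup>2 + z\<^sup>2)\<close> of the bilinear term \<open>2 d y z = |d| (y + \<sigma> z)\<^sup>2 - |d| (y\<^sup>2 + z\<^sup>2)\<close>,
  so \<open>h_cvx + h_aff\<close> majorises \<open>P(s,\<alpha>,s') p\<^sub>s\<^sub>'\<close>.  With zero penalty the constraints
  therefore say that \<open>p\<close> is a superharmonic function of every induced Markov chain
  which is \<open>1\<close> on \<open>T\<close> and nonnegative; by induction it bounds every step-bounded
  reachability probability, hence the reachability probability from \<open>s\<^sub>I\<close>, and
  \<open>p\<^sub>s\<^sub>I \<le> \<lambda>\<close>.  Well-definedness holds because every transition is either
  identically zero or at least \<open>\<epsilon> > 0\<close>, and the rows sum to one.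
\<close>

lemma h_cvx_plus_h_aff_eq:
  "h_cvx d y c v p s a s' + h_aff d y vhat phat v p s a s'
     = trans_eval d y c v s a s' * p s'
       + \<bar>d s a s'\<bar> * ((v (y s a s') - vhat (y s a s'))\<^sup>2 + (p s' - phat s')\<^sup>2)"
  by (cases "d s a s' \<ge> 0")
     (simp_all add: h_cvx_def h_aff_def trans_eval_def sgn_d_def power2_eq_square algebra_simps)

lemma trans_eval_mult_le_h_cvx_plus_h_aff:
  "trans_eval d y c v s a s' * p s' \<le> h_cvx d y c v p s a s' + h_aff d y vhat phat v p s a s'"
  unfolding h_cvx_plus_h_aff_eq by simp

lemma reach_within_le_superharmonic:
  assumes P_nonneg: "\<And>s s'. s \<in> S \<Longrightarrow> s' \<in> S \<Longrightarrow> 0 \<le> P s s'"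
    and q_nonneg: "\<And>s. s \<in> S \<Longrightarrow> 0 \<le> q s"
    and q_target: "\<And>s. s \<in> S \<Longrightarrow> s \<in> T \<Longrightarrow> 1 \<le> q s"
    and q_superharmonic: "\<And>s. s \<in> S - T \<Longrightarrow> (\<Sum>s'\<in>S. P s s' * q s') \<le> q s"
    and "s \<in> S"
  shows "reach_within S P T n s \<le> q s"
  using \<open>s \<in> S\<close>
proof (induction n arbitrary: s)
  case 0
  then show ?case using q_nonneg q_target by simp
next
  case (Suc n)
  show ?case
  proof (cases "s \<in> T")
    case True
    then show ?thesis using Suc.prems q_target by simp
  next
    case False
    have "(\<Sum>s'\<in>S. P s s' * reach_within S P T n s') \<le> (\<Sum>s'\<in>S. P s s' * q s')"
      by (intro sum_mono mult_left_mono Suc.IH P_nonneg Suc.prems)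
    also have "\<dots> \<le> q s"
      using False Suc.prems q_superharmonic by blast
    finally show ?thesis using False by simp
  qed
qed

lemma reach_prob_le_superharmonic:
  assumes "\<And>s s'. s \<in> S \<Longrightarrow> s' \<in> S \<Longrightarrow> 0 \<le> P s s'"
    and "\<And>s. s \<in> S \<Longrightarrow> 0 \<le> q s"
    and "\<And>s. s \<in> S \<Longrightarrow> s \<in> T \<Longrightarrow> 1 \<le> q s"
    and "\<And>s. s \<in> S - T \<Longrightarrow> (\<Sum>s'\<in>S. P s s' * q s') \<le> q s"
    and "s \<in> S"
  shows "reach_prob S P T s \<le> q s"
  unfolding reach_prob_def
  by (rule cSUP_least) (use reach_within_le_superharmonic[OF assms] in auto)

lemma feasible_imp_trans_eval_nonneg:
  assumes "feasible S sI Act d y c T lam eps vhat phat v p k" and "0 \<le> eps"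
    and "s \<in> S" and "a \<in> enabled S Act d c s" and "s' \<in> S"
  shows "0 \<le> trans_eval d y c v s a s'"
proof (cases "nonzero_poly d c s a s'")
  case True
  then show ?thesis using assms unfolding feasible_def by force
next
  case False
  then show ?thesis by (simp add: nonzero_poly_def trans_eval_def)
qed

lemma feasible_imp_well_defined:
  assumes "feasible S sI Act d y c T lam eps vhat phat v p k" and "0 \<le> eps" and "finite S"
  shows "well_defined S Act d y c v"
  unfolding well_defined_def
proof (intro ballI conjI)
  fix s a s' assume s: "s \<in> S" and a: "a \<in> enabled S Act d c s" and s': "s' \<in> S"
  note nonneg = feasible_imp_trans_eval_nonneg[OF assms(1,2) s a]
  show "0 \<le> trans_eval d y c v s a s'" using nonneg s' .
  have "trans_eval d y c v s a s' \<le> (\<Sum>s''\<in>S. trans_eval d y c v s a s'')"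
    using \<open>finite S\<close> s' nonneg by (intro member_le_sum) auto
  also have "\<dots> = 1" using assms(1) s a unfolding feasible_def by blast
  finally show "trans_eval d y c v s a s' \<le> 1" .
next
  fix s a assume "s \<in> S" and "a \<in> enabled S Act d c s"
  then show "(\<Sum>s'\<in>S. trans_eval d y c v s a s') = 1"
    using assms(1) unfolding feasible_def by blast
qed

lemma feasible_zero_penalty_superharmonic:
  assumes "feasible S sI Act d y c T lam eps vhat phat v p k"
    and "\<forall>s\<in>S - T. k s = 0" and "s \<in> S - T" and "a \<in> enabled S Act d c s"
  shows "(\<Sum>s'\<in>S. trans_eval d y c v s a s' * p s') \<le> p s"
proof -
  have "(\<Sum>s'\<in>S. trans_eval d y c v s a s' * p s')
      \<le> (\<Sum>s'\<in>S. h_cvx d y c v p s a s' + h_aff d y vhat phat v p s a s')"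
    by (intro sum_mono trans_eval_mult_le_h_cvx_plus_h_aff)
  also have "\<dots> \<le> k s + p s"
    using assms(1,3,4) unfolding feasible_def by blast
  finally show ?thesis using assms(2,3) by simp
qed

theorem theorem1:
  fixes S :: "'s set" and sI :: 's and Act :: "'a set" and V :: "'v set"
    and d c :: "'s \<Rightarrow> 'a \<Rightarrow> 's \<Rightarrow> real" and y :: "'s \<Rightarrow> 'a \<Rightarrow> 's \<Rightarrow> 'v"
    and T :: "'s set" and lam eps tau :: real
    and vhat :: "'v \<Rightarrow> real" and phat :: "'s \<Rightarrow> real"
    and v :: "'v \<Rightarrow> real" and p k :: "'s \<Rightarrow> real"
  assumes "finite S" and "finite Act" and "finite V" and "sI \<in> S"
    and "\<forall>s\<in>S. enabled S Act d c s \<noteq> {}"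
    and "\<forall>s\<in>S. \<forall>a\<in>enabled S Act d c s. \<forall>s'\<in>S. y s a s' \<in> V"
    and "T \<subseteq> S" and "0 \<le> lam" and "lam \<le> 1"
    and "eps > 0" and "tau > 0"
    and "feasible S sI Act d y c T lam eps vhat phat v p k"
    and "tau * (\<Sum>s\<in>S - T. k s) = 0"
  shows "well_defined S Act d y c v \<and> satisfies S sI Act d y c v T lam"
proof
  note feas = assms(12)
  show "well_defined S Act d y c v"
    using feasible_imp_well_defined feas assms(1,10) by fastforce
  have "(\<Sum>s\<in>S - T. k s) = 0" using assms(11,13) by simp
  then have k_zero: "\<forall>s\<in>S - T. k s = 0"
    using sum_nonneg_eq_0_iff[of "S - T" k] feas assms(1) unfolding feasible_def by auto
  show "satisfies S sI Act d y c v T lam"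
    unfolding satisfies_def
  proof (intro allI impI)
    fix \<sigma> assume \<sigma>: "\<forall>s\<in>S. \<sigma> s \<in> enabled S Act d c s"
    have "reach_prob S (induced_mc d y c v \<sigma>) T sI \<le> p sI"
    proof (rule reach_prob_le_superharmonic)
      show "\<And>s s'. s \<in> S \<Longrightarrow> s' \<in> S \<Longrightarrow> 0 \<le> induced_mc d y c v \<sigma> s s'"
        unfolding induced_mc_def
        using feasible_imp_trans_eval_nonneg[OF feas less_imp_le[OF assms(10)]] \<sigma> by blast
      show "\<And>s. s \<in> S - T \<Longrightarrow> (\<Sum>s'\<in>S. induced_mc d y c v \<sigma> s s' * p s') \<le> p s"
        unfolding induced_mc_def using feasible_zero_penalty_superharmonic[OF feas k_zero] \<sigma>
        by blast
    qed (use feas assms(4) in \<open>auto simp: feasible_def\<close>)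
    then show "reach_prob S (induced_mc d y c v \<sigma>) T sI \<le> lam"
      using feas unfolding feasible_def by linarith
  qed
qed

end
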